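(* Let $\mathcal{S}\in\mathrm{Rep}$. Then there is a unique standard extended multi-segment $\mathcal{S}'\in[\mathcal{S}]$.
   Context: Formal extended segment: $([A,B]_\rho,\mu)$ with $\rho$ irreducible self-dual supercuspidal of some $\mathrm{GL}_d(F)$ ($F$ $p$-adic), $A-B\in\mathbb{Z}_{\ge0}$, $\mu\in\mathbb{Z}$, $\mu\equiv b\pmod2$ with $b=A-B+1$, $a=A+B+1$; extended segment if moreover $|\mu|\le b$. A formal extended multi-segment $\mathcal{S}$: a finite set $C_{\mathcal{S}}$ of such $\rho$ and sequences $(([A_i^\rho,B_i^\rho]_\rho,\mu_i^\rho))_{i=1}^{n_\rho}$ of formal extended segments with: $A_i^\rho>A_j^\rho$ and $B_i^\rho>B_j^\rho$ imply $i>j$; $A_i^\rho+B_i^\rho\ge0$; $\bigoplus_{\rho,i}\rho\boxtimes S_{a_i^\rho}\boxtimes S_{b_i^\rho}$ is an Arthur parameter of good parity for some $G_n$ ($G_n$ split $\mathrm{SO}_{2n+1}(F)$ or $\mathrm{Sp}_{2n}(F)$); $\sum_\rho\sum_i(\lfloor\mu_i^\rho/2\rfloor+\mu_i^\rho\sum_{j<i}(b_j^\rho-1))\equiv0\pmod2$. Extended multi-segment: all entries are extended segments. Admissible: for each $\rho$ with some $B_i^\rho<0$, $B_i^\rho>B_j^\rho\Rightarrow i>j$. Condition (N): $|A_i^\rho-A_{i-1}^\rho|+|B_i^\rho-B_{i-1}^\rho|\ge|\mu_i^\rho-\mu_{i-1}^\rho|$ for all $\rho$, $1<i\le n_\rho$.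 Reorder $R_i^\rho$ (changing only positions $i,i+1$ of the $\rho$-sequence): if $[A_i,B_i]\subseteq[A_{i+1},B_{i+1}]$, replace by $([A_{i+1},B_{i+1}]_\rho,2\mu_i-\mu_{i+1}),([A_i,B_i]_\rho,\mu_i)$; if $[A_i,B_i]\supseteq[A_{i+1},B_{i+1}]$, replace by $([A_{i+1},B_{i+1}]_\rho,\mu_{i+1}),([A_i,B_i]_\rho,2\mu_{i+1}-\mu_i)$; if $A_{i+1}\ge A_i$, $B_{i+1}\ge B_i$, do nothing. $[\mathcal{S}]$ is the equivalence class generated by these operations. $\mathrm{Rep}$: admissible extended multi-segments $\mathcal{S}$ such that every element of $[\mathcal{S}]$ satisfies (N), and $|\hat\mu_i^\rho|\le a_i^\rho$ for all $i,\rho$, where $\hat\mu_i^\rho=\mu_i^\rho$ if $B_i^\rho\in\mathbb{Z}$ and $\mu_i^\rho-1$ otherwise. $\mathcal{S}$ is standard if for all $\rho$, $i,j$: ($B_i^\rho<B_j^\rho$, or $B_i^\rho=B_j^\rho$ and $A_i^\rho>A_j^\rho$) implies $i<j$. *)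

theory Defs
  imports Complex_Main
begin

text \<open>
  A (formal) extended segment ([A,B]_rho, mu) attached to rho is stored as a triple (A, B, mu)
  with A, B rational (half-integers) and mu an integer; the supercuspidal rho is recorded by the
  position in the multi-segment (see below).
\<close>

type_synonym seg = "rat \<times> rat \<times> int"

definition segA :: "seg \<Rightarrow> rat" where "segA s = fst s"
definition segB :: "seg \<Rightarrow> rat" where "segB s = fst (snd s)"
definition segmu :: "seg \<Rightarrow> int" where "segmu s = snd (snd s)"

definition seg_a :: "seg \<Rightarrow> int" where "seg_a s = \<lfloor>segA s + segB s\<rfloor> + 1"
definition seg_b :: "seg \<Rightarrow> int" where "seg_b s = \<lfloor>segA s - segB s\<rfloor> + 1"

definition formal_ext_segment :: "seg \<Rightarrow> bool" where
  "formal_ext_segment s \<longleftrightarrow>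
     segA s - segB s \<in> \<int> \<and> segA s + segB s \<in> \<int> \<and> segB s \<le> segA s \<and>
     even (segmu s - seg_b s)"

definition ext_segment :: "seg \<Rightarrow> bool" where
  "ext_segment s \<longleftrightarrow> formal_ext_segment s \<and> \<bar>segmu s\<bar> \<le> seg_b s"

text \<open>
  A multi-segment is a map S from supercuspidals rho (elements of the type 'r) to the finite
  sequence of segments attached to rho; C_S = {rho. S rho \<noteq> []}.
  The supercuspidals are described by the data:
  d rho (rho is a representation of GL_{d rho}(F)), orth rho (rho self-dual of orthogonal type;
  otherwise of symplectic type), dt rho (the determinant character of rho, an element of an
  abelian group of characters written additively).
\<close>

definition supp :: "('r \<Rightarrow> seg list) \<Rightarrow> 'r set" where
  "supp S = {\<rho>. S \<rho> \<noteq> []}"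

definition parity_sum :: "seg list \<Rightarrow> int" where
  "parity_sum L = (\<Sum>i<length L. segmu (L!i) div 2 + segmu (L!i) * (\<Sum>j<i. seg_b (L!j) - 1))"

definition summand_orth :: "('r \<Rightarrow> bool) \<Rightarrow> 'r \<Rightarrow> seg \<Rightarrow> bool" where
  "summand_orth orth \<rho> s \<longleftrightarrow> (orth \<rho> \<longleftrightarrow> even (seg_a s + seg_b s))"

definition param_dim :: "('r \<Rightarrow> nat) \<Rightarrow> ('r \<Rightarrow> seg list) \<Rightarrow> int" where
  "param_dim d S = (\<Sum>\<rho>\<in>supp S. \<Sum>s\<leftarrow>S \<rho>. int (d \<rho>) * seg_a s * seg_b s)"

text \<open>Determinant of the parameter: det(rho x S_a x S_b) = det(rho)^(ab).\<close>
definition param_det :: "('r \<Rightarrow> 'q::ab_group_add) \<Rightarrow> ('r \<Rightarrow> seg list) \<Rightarrow> 'q" where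
  "param_det dt S = (\<Sum>\<rho>\<in>supp S. \<Sum>s\<leftarrow>S \<rho>. if odd (seg_a s * seg_b s) then dt \<rho> else 0)"

text \<open>The sum of rho x S_a x S_b is an Arthur parameter of good parity for some G_n:
  either G_n = Sp_{2n} (dual SO_{2n+1}: all summands orthogonal, dimension 2n+1, trivial
  determinant) or G_n = split SO_{2n+1} (dual Sp_{2n}: all summands symplectic, dimension 2n).\<close>
definition good_parity_param ::
  "('r \<Rightarrow> nat) \<Rightarrow> ('r \<Rightarrow> bool) \<Rightarrow> ('r \<Rightarrow> 'q::ab_group_add) \<Rightarrow> ('r \<Rightarrow> seg list) \<Rightarrow> bool" where
  "good_parity_param d orth dt S \<longleftrightarrow>
     (\<exists>n::nat.
        ((\<forall>\<rho>\<in>supp S. \<forall>s\<in>set (S \<rho>). summand_orth orth \<rho> s) \<and>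
           param_dim d S = 2 * int n + 1 \<and> param_det dt S = 0)
      \<or> ((\<forall>\<rho>\<in>supp S. \<forall>s\<in>set (S \<rho>). \<not> summand_orth orth \<rho> s) \<and>
           param_dim d S = 2 * int n))"

definition formal_ext_multiseg ::
  "('r \<Rightarrow> nat) \<Rightarrow> ('r \<Rightarrow> bool) \<Rightarrow> ('r \<Rightarrow> 'q::ab_group_add) \<Rightarrow> ('r \<Rightarrow> seg list) \<Rightarrow> bool" where
  "formal_ext_multiseg d orth dt S \<longleftrightarrow>
     finite (supp S) \<and>
     (\<forall>\<rho>. \<forall>s\<in>set (S \<rho>). formal_ext_segment s) \<and>
     (\<forall>\<rho>. \<forall>i<length (S \<rho>). \<forall>j<length (S \<rho>).
        segA (S \<rho> ! i) > segA (S \<rho> ! j) \<and> segB (S \<rho> ! i) > segB (S \<rho> ! j) \<longrightarrow> i > j) \<and>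
     (\<forall>\<rho>. \<forall>s\<in>set (S \<rho>). segA s + segB s \<ge> 0) \<and>
     good_parity_param d orth dt S \<and>
     even (\<Sum>\<rho>\<in>supp S. parity_sum (S \<rho>))"

definition ext_multiseg ::
  "('r \<Rightarrow> nat) \<Rightarrow> ('r \<Rightarrow> bool) \<Rightarrow> ('r \<Rightarrow> 'q::ab_group_add) \<Rightarrow> ('r \<Rightarrow> seg list) \<Rightarrow> bool" where
  "ext_multiseg d orth dt S \<longleftrightarrow>
     formal_ext_multiseg d orth dt S \<and> (\<forall>\<rho>. \<forall>s\<in>set (S \<rho>). ext_segment s)"

definition admissible :: "('r \<Rightarrow> seg list) \<Rightarrow> bool" where
  "admissible S \<longleftrightarrow>
     (\<forall>\<rho>. (\<exists>s\<in>set (S \<rho>). segB s < 0) \<longrightarrow>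
        (\<forall>i<length (S \<rho>). \<forall>j<length (S \<rho>). segB (S \<rho> ! i) > segB (S \<rho> ! j) \<longrightarrow> i > j))"

definition condN :: "('r \<Rightarrow> seg list) \<Rightarrow> bool" where
  "condN S \<longleftrightarrow>
     (\<forall>\<rho>. \<forall>i. i + 1 < length (S \<rho>) \<longrightarrow>
        \<bar>segA (S \<rho> ! (i+1)) - segA (S \<rho> ! i)\<bar> + \<bar>segB (S \<rho> ! (i+1)) - segB (S \<rho> ! i)\<bar>
          \<ge> of_int \<bar>segmu (S \<rho> ! (i+1)) - segmu (S \<rho> ! i)\<bar>)"

definition reorder :: "nat \<Rightarrow> seg list \<Rightarrow> seg list" where
  "reorder i L =
     (let s = L ! i; t = L ! (i+1) in
      if segB t \<le> segB s \<and> segA s \<le> segA t then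
        L[i := (segA t, segB t, 2 * segmu s - segmu t), i+1 := s]
      else if segB s \<le> segB t \<and> segA t \<le> segA s then
        L[i := t, i+1 := (segA s, segB s, 2 * segmu t - segmu s)]
      else L)"

definition reorder_step :: "('r \<Rightarrow> seg list) \<Rightarrow> ('r \<Rightarrow> seg list) \<Rightarrow> bool" where
  "reorder_step S S' \<longleftrightarrow>
     (\<exists>\<rho> i. i + 1 < length (S \<rho>) \<and> S' = S(\<rho> := reorder i (S \<rho>)))"

definition equiv_class :: "('r \<Rightarrow> seg list) \<Rightarrow> ('r \<Rightarrow> seg list) set" where
  "equiv_class S = {S'. equivclp reorder_step S S'}"

definition hat_mu :: "seg \<Rightarrow> int" where
  "hat_mu s = (if segB s \<in> \<int> then segmu s else segmu s - 1)"

definition Rep ::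
  "('r \<Rightarrow> nat) \<Rightarrow> ('r \<Rightarrow> bool) \<Rightarrow> ('r \<Rightarrow> 'q::ab_group_add) \<Rightarrow> ('r \<Rightarrow> seg list) \<Rightarrow> bool" where
  "Rep d orth dt S \<longleftrightarrow>
     ext_multiseg d orth dt S \<and> admissible S \<and>
     (\<forall>S'\<in>equiv_class S. condN S') \<and>
     (\<forall>\<rho>. \<forall>s\<in>set (S \<rho>). \<bar>hat_mu s\<bar> \<le> seg_a s)"

definition standard :: "('r \<Rightarrow> seg list) \<Rightarrow> bool" where
  "standard S \<longleftrightarrow>
     (\<forall>\<rho>. \<forall>i<length (S \<rho>). \<forall>j<length (S \<rho>).
        (segB (S \<rho> ! i) < segB (S \<rho> ! j) \<or>
         (segB (S \<rho> ! i) = segB (S \<rho> ! j) \<and> segA (S \<rho> ! i) > segA (S \<rho> ! j))) \<longrightarrow> i < j)"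

end

theory Submission
  imports Defs "HOL-Library.Multiset" "HOL-Library.Product_Lexorder"
begin

text \<open>Existence is bubble sort. In a formal multi-segment no entry precedes one lying strictly
  below it in both endpoints, so two adjacent entries out of standard order are nested, and \<open>R\<^sub>i\<close>
  swaps them, replacing the \<open>\<mu>\<close> of the outer one by its reflection \<open>2\<mu>' - \<mu>\<close> in the
  \<open>\<mu>'\<close> of the inner one.
  Condition (N) bounds the reflected value by \<open>b\<close> and the sign sum changes by an even amount,
  so every step stays among extended multi-segments.

  Uniqueness comes from an invariant. Give every entry the value \<open>\<mu>\<close> would take if the entry
  were moved to the front of its sequence, reflecting in each strictly smaller segment it passes.
  The multiset of these normalised entries is unchanged by every \<open>R\<^sub>i\<close> (condition (N) excludes
  equal intervals with different \<open>\<mu>\<close>); on a standard sequence nothing is passed, so the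
  sequence is its own normal form, and a standard sequence satisfying (N) is determined by its
  multiset of entries.\<close>

lemma seg_simps [simp]: "segA (a, b, m) = a" "segB (a, b, m) = b" "segmu (a, b, m) = m"
  by (simp_all add: segA_def segB_def segmu_def)

lemma seg_eta [simp]: "(segA x, segB x, segmu x) = x"
  by (simp add: segA_def segB_def segmu_def)

lemma sorted_wrt_iff_index_order:
  assumes "\<And>x. \<not> R x x"
  shows "sorted_wrt (\<lambda>x y. \<not> R y x) xs \<longleftrightarrow>
    (\<forall>i<length xs. \<forall>j<length xs. R (xs ! i) (xs ! j) \<longrightarrow> i < j)"
  unfolding sorted_wrt_iff_nth_less
proof (intro iffI allI impI)
  fix i j
  assume "\<forall>i j. i < j \<longrightarrow> j < length xs \<longrightarrow> \<not> R (xs ! j) (xs ! i)"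
    and "i < length xs" "j < length xs" "R (xs ! i) (xs ! j)"
  then show "i < j"
    using assms by (metis linorder_neqE_nat)
next
  fix i j
  assume "\<forall>i<length xs. \<forall>j<length xs. R (xs ! i) (xs ! j) \<longrightarrow> i < j"
    and "i < j" "j < length xs"
  then show "\<not> R (xs ! j) (xs ! i)"
    by (meson order.asym order.strict_trans)
qed

lemma sum_list_map_eq_if_mset_key_eq:
  fixes h :: "'a \<Rightarrow> 'c::comm_monoid_add"
  assumes "mset (map k xs) = mset (map k ys)" "\<And>x y. k x = k y \<Longrightarrow> h x = h y"
  shows "sum_list (map h xs) = sum_list (map h ys)"
proof -
  define g where "g v = h (inv k v)" for v
  have "h x = g (k x)" for x
    unfolding g_def by (rule assms(2)) (simp add: f_inv_into_f)
  then have "sum_list (map h zs) = sum_mset (image_mset g (mset (map k zs)))" for zs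
    by (induction zs) simp_all
  then show ?thesis
    using assms(1) by simp
qed

lemma ball_set_eq_if_mset_key_eq:
  assumes "mset (map k xs) = mset (map k ys)" "\<And>x y. k x = k y \<Longrightarrow> P x \<longleftrightarrow> P y"
  shows "(\<forall>x\<in>set xs. P x) \<longleftrightarrow> (\<forall>y\<in>set ys. P y)"
proof -
  have transfer: "\<forall>y\<in>B. P y" if "\<forall>x\<in>A. P x" "k ` A = k ` B" for A B
  proof
    fix y
    assume "y \<in> B"
    then have "k y \<in> k ` A"
      using that(2) by simp
    then obtain x where "x \<in> A" "k y = k x"
      by blast
    then show "P y"
      using that(1) assms(2) by blast
  qed
  have "k ` set xs = k ` set ys"
    using assms(1) by (metis set_map set_mset_mset)
  then show ?thesis
    using transfer[of "set xs" "set ys"] transfer[of "set ys" "set xs"] by auto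
qed

section \<open>Nested segments and the moves \<open>R\<^sub>i\<close>\<close>

text \<open>The key \<open>(B, -A)\<close> encodes the interval \<open>[A, B]\<close> so that the standard order is the
  lexicographic order on keys.\<close>

definition standard_key :: "seg \<Rightarrow> rat \<times> rat" where
  "standard_key x = (segB x, - segA x)"

lemma standard_key_eq_iff: "standard_key x = standard_key y \<longleftrightarrow> segA x = segA y \<and> segB x = segB y"
  by (auto simp: standard_key_def)

lemma standard_key_eqD:
  "standard_key x = standard_key y \<Longrightarrow>
    segA x = segA y \<and> segB x = segB y \<and> seg_a x = seg_a y \<and> seg_b x = seg_b y"
  by (simp add: standard_key_eq_iff seg_a_def seg_b_def)

lemma standard_iff: "standard T \<longleftrightarrow> (\<forall>\<rho>. sorted (map standard_key (T \<rho>)))"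
proof -
  have "standard_key x < standard_key y \<longleftrightarrow> segB x < segB y \<or> segB x = segB y \<and> segA x > segA y"
    for x y by (auto simp: standard_key_def less_prod_def)
  then show ?thesis
    unfolding standard_def sorted_map not_less[symmetric]
      sorted_wrt_iff_index_order[of "\<lambda>x y. standard_key x < standard_key y", OF less_irrefl]
    by presburger
qed

definition nested :: "seg \<Rightarrow> seg \<Rightarrow> bool" where
  "nested x y \<longleftrightarrow> segB y \<le> segB x \<and> segA x \<le> segA y"

lemma nested_if_standard_key_le: "standard_key y \<le> standard_key x \<Longrightarrow> nested y x \<Longrightarrow> nested x y"
  by (auto simp: standard_key_def nested_def less_eq_prod_def)

definition reflect_about :: "seg \<Rightarrow> seg \<Rightarrow> seg" where
  "reflect_about s t = (segA t, segB t, 2 * segmu s - segmu t)"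

lemma reflect_about_simps [simp]:
  "segA (reflect_about s t) = segA t" "segB (reflect_about s t) = segB t"
  "segmu (reflect_about s t) = 2 * segmu s - segmu t"
  "standard_key (reflect_about s t) = standard_key t"
  "seg_a (reflect_about s t) = seg_a t" "seg_b (reflect_about s t) = seg_b t"
  by (simp_all add: reflect_about_def standard_key_def seg_a_def seg_b_def)

lemma reflect_about_reflect_about [simp]: "reflect_about s (reflect_about s t) = t"
  by (simp add: reflect_about_def)

lemma reorder_cases:
  assumes "i + 1 < length L"
  obtains (unchanged) "reorder i L = L"
  | (inner_first) xs s t ys where "L = xs @ s # t # ys" "nested s t"
      "reorder i L = xs @ reflect_about s t # s # ys"
  | (outer_first) xs s t ys where "L = xs @ s # t # ys" "nested t s" "\<not> nested s t"
      "reorder i L = xs @ t # reflect_about t s # ys"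
proof -
  obtain xs s t ys where L: "L = xs @ s # t # ys" and i: "length xs = i"
  proof
    show "L = take i L @ L ! i # L ! (i + 1) # drop (i + 2) L"
      using assms by (simp add: Cons_nth_drop_Suc id_take_nth_drop)
    show "length (take i L) = i"
      using assms by simp
  qed
  have "reorder i L = (if nested s t then xs @ reflect_about s t # s # ys
      else if nested t s then xs @ t # reflect_about t s # ys else L)"
    by (simp add: L i[symmetric] reorder_def nth_append list_update_append nested_def
        reflect_about_def)
  then show ?thesis
    using that L by (auto split: if_splits)
qed

definition reorder_list :: "seg list \<Rightarrow> seg list \<Rightarrow> bool" where
  "reorder_list L L' \<longleftrightarrow> (\<exists>i. i + 1 < length L \<and> L' = reorder i L)"

text \<open>An outer-first move is the inverse of an inner-first one, because
  \<open>reflect_about t (reflect_about t s) = s\<close>.\<close>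

lemma reorder_list_cases:
  assumes "reorder_list L L'"
  obtains (unchanged) "L' = L"
  | (inner_first) xs s t ys where "L = xs @ s # t # ys" "nested s t"
      "L' = xs @ reflect_about s t # s # ys"
  | (outer_first) xs s t ys where "L = xs @ s # t # ys" "nested t s" "\<not> nested s t"
      "L' = xs @ t # reflect_about t s # ys"
  using assms unfolding reorder_list_def by (metis reorder_cases)

lemma reorder_Cons: "reorder (Suc i) (x # L) = x # reorder i L"
  by (simp add: reorder_def Let_def)

lemma reorder_list_Cons: "reorder_list L L' \<Longrightarrow> reorder_list (x # L) (x # L')"
  unfolding reorder_list_def
  by (metis Suc_eq_plus1 Suc_less_eq length_Cons reorder_Cons)

lemma reorder_lists_Cons: "reorder_list\<^sup>*\<^sup>* L L' \<Longrightarrow> reorder_list\<^sup>*\<^sup>* (x # L) (x # L')"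
  by (induction rule: rtranclp_induct) (auto intro: rtranclp.rtrancl_into_rtrancl reorder_list_Cons)

lemma reorder_list_nested_front:
  assumes "nested x y"
  shows "reorder_list (x # y # zs) (reflect_about x y # x # zs)"
  unfolding reorder_list_def
  by (rule exI[of _ 0]) (use assms in \<open>simp add: reorder_def nested_def reflect_about_def\<close>)

lemma reorder_stepE:
  assumes "reorder_step T T'"
  obtains \<rho> L where "reorder_list (T \<rho>) L" "T' = T(\<rho> := L)"
  using assms unfolding reorder_step_def reorder_list_def by blast

lemma reorder_lists_reorder_steps:
  "reorder_list\<^sup>*\<^sup>* (T \<rho>) L \<Longrightarrow> reorder_step\<^sup>*\<^sup>* T (T(\<rho> := L))"
proof (induction rule: rtranclp_induct)
  case base
  then show ?case by simp
next
  case (step L L')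
  then obtain i where "i + 1 < length L" "L' = reorder i L"
    by (auto simp: reorder_list_def)
  then have "reorder_step (T(\<rho> := L)) (T(\<rho> := L'))"
    unfolding reorder_step_def by (intro exI[of _ \<rho>] exI[of _ i]) simp
  moreover have "reorder_step\<^sup>*\<^sup>* T (T(\<rho> := L))"
    using step.IH by (simp add: fun_upd_def)
  ultimately have "reorder_step\<^sup>*\<^sup>* T (T(\<rho> := L'))"
    by (simp add: rtranclp.rtrancl_into_rtrancl)
  then show ?case
    by (simp add: fun_upd_def)
qed

section \<open>Invariants of a move\<close>

lemma reorder_list_mset_standard_key:
  assumes "reorder_list L L'"
  shows "mset (map standard_key L') = mset (map standard_key L)"
  using assms by (cases rule: reorder_list_cases) simp_all

lemma reorder_lists_mset_standard_key:
  "reorder_list\<^sup>*\<^sup>* L L' \<Longrightarrow> mset (map standard_key L') = mset (map standard_key L)"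
  by (induction rule: rtranclp_induct) (auto dest: reorder_list_mset_standard_key)

definition seg_lt :: "seg \<Rightarrow> seg \<Rightarrow> bool" where
  "seg_lt x y \<longleftrightarrow> segA x < segA y \<and> segB x < segB y"

definition seg_ordered :: "seg list \<Rightarrow> bool" where
  "seg_ordered L \<longleftrightarrow> sorted_wrt (\<lambda>x y. \<not> seg_lt y x) L"

lemma seg_ordered_iff:
  "seg_ordered L \<longleftrightarrow>
    (\<forall>i<length L. \<forall>j<length L. segA (L ! i) > segA (L ! j) \<and> segB (L ! i) > segB (L ! j) \<longrightarrow> i > j)"
proof -
  have "seg_ordered L \<longleftrightarrow> (\<forall>i<length L. \<forall>j<length L. seg_lt (L ! i) (L ! j) \<longrightarrow> i < j)"
    unfolding seg_ordered_def by (rule sorted_wrt_iff_index_order) (simp add: seg_lt_def)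
  then show ?thesis
    unfolding seg_lt_def by blast
qed

lemma ext_multiseg_formal: "ext_multiseg d orth dt T \<Longrightarrow> formal_ext_multiseg d orth dt T"
  by (simp add: ext_multiseg_def)

lemma formal_ext_multiseg_seg_ordered: "formal_ext_multiseg d orth dt T \<Longrightarrow> seg_ordered (T \<rho>)"
  by (simp add: formal_ext_multiseg_def seg_ordered_iff)

lemma seg_ordered_swap:
  assumes "seg_ordered (xs @ s # t # ys)" "\<not> seg_lt s t"
    and "standard_key s' = standard_key s" "standard_key t' = standard_key t"
  shows "seg_ordered (xs @ t' # s' # ys)"
proof -
  have "seg_lt x s' = seg_lt x s" "seg_lt s' x = seg_lt s x"
    "seg_lt x t' = seg_lt x t" "seg_lt t' x = seg_lt t x" for x
    using assms(3,4) by (auto simp: seg_lt_def standard_key_eq_iff)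
  then show ?thesis
    using assms(1,2) by (simp add: seg_ordered_def sorted_wrt_append)
qed

lemma reorder_list_seg_ordered:
  assumes "reorder_list L L'" "seg_ordered L"
  shows "seg_ordered L'"
  using assms(1)
proof (cases rule: reorder_list_cases)
  case unchanged
  then show ?thesis using assms(2) by simp
next
  case (inner_first xs s t ys)
  then show ?thesis
    using assms(2) seg_ordered_swap[of xs s t ys s "reflect_about s t"]
    by (simp add: seg_lt_def nested_def)
next
  case (outer_first xs s t ys)
  then show ?thesis
    using assms(2) seg_ordered_swap[of xs s t ys "reflect_about t s" t]
    by (simp add: seg_lt_def nested_def)
qed

lemma reorder_lists_seg_ordered:
  "reorder_list\<^sup>*\<^sup>* L L' \<Longrightarrow> seg_ordered L \<Longrightarrow> seg_ordered L'"
  by (induction rule: rtranclp_induct) (auto intro: reorder_list_seg_ordered)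

definition condN_list :: "seg list \<Rightarrow> bool" where
  "condN_list L \<longleftrightarrow>
     (\<forall>i. i + 1 < length L \<longrightarrow>
        \<bar>segA (L ! (i+1)) - segA (L ! i)\<bar> + \<bar>segB (L ! (i+1)) - segB (L ! i)\<bar>
          \<ge> of_int \<bar>segmu (L ! (i+1)) - segmu (L ! i)\<bar>)"

lemma condN_iff_condN_list: "condN S \<longleftrightarrow> (\<forall>\<rho>. condN_list (S \<rho>))"
  by (simp add: condN_def condN_list_def)

lemma condN_list_adjacent:
  assumes "condN_list (xs @ s # t # ys)"
  shows "of_int \<bar>segmu t - segmu s\<bar> \<le> \<bar>segA t - segA s\<bar> + \<bar>segB t - segB s\<bar>"
  using assms[unfolded condN_list_def, rule_format, of "length xs"] by (simp add: nth_append)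

lemma seg_b_of_int:
  assumes "formal_ext_segment x"
  shows "of_int (seg_b x) = segA x - segB x + 1"
proof -
  obtain k where "segA x - segB x = of_int k"
    using assms unfolding formal_ext_segment_def by (blast elim: Ints_cases)
  then show ?thesis
    by (simp add: seg_b_def)
qed

lemma formal_ext_segment_reflect_about:
  assumes "formal_ext_segment s" "formal_ext_segment t"
  shows "formal_ext_segment (reflect_about s t)"
proof -
  have "even (segmu t - seg_b t)"
    using assms(2) unfolding formal_ext_segment_def by simp
  then have "even (2 * segmu s - segmu t - seg_b t)"
    by presburger
  then show ?thesis
    using assms(2) unfolding formal_ext_segment_def by simp
qed

text \<open>For nested segments the right-hand side of (N) is \<open>b\<^sub>t - b\<^sub>s\<close>, so
  \<open>|2\<mu>\<^sub>s - \<mu>\<^sub>t| \<le> |\<mu>\<^sub>s| + |\<mu>\<^sub>s - \<mu>\<^sub>t| \<le> b\<^sub>s + (b\<^sub>t - b\<^sub>s)\<close>.\<close>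

lemma ext_segment_reflect_about:
  assumes "nested s t" "ext_segment s" "formal_ext_segment t"
    and "of_int \<bar>segmu t - segmu s\<bar> \<le> \<bar>segA t - segA s\<bar> + \<bar>segB t - segB s\<bar>"
  shows "ext_segment (reflect_about s t)"
proof -
  have s: "formal_ext_segment s" "\<bar>segmu s\<bar> \<le> seg_b s"
    using assms(2) unfolding ext_segment_def by simp_all
  have "(of_int \<bar>segmu t - segmu s\<bar> :: rat) \<le> of_int (seg_b t - seg_b s)"
    using assms(1,4) seg_b_of_int[OF s(1)] seg_b_of_int[OF assms(3)]
    by (simp add: nested_def)
  then have "\<bar>2 * segmu s - segmu t\<bar> \<le> seg_b t"
    using s(2) by linarith
  then show ?thesis
    using formal_ext_segment_reflect_about[OF s(1) assms(3)]
    by (simp add: ext_segment_def)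
qed

lemma reorder_list_ext_segments:
  assumes "reorder_list L L'" "condN_list L" "\<forall>x\<in>set L. ext_segment x"
  shows "\<forall>x\<in>set L'. ext_segment x"
  using assms(1)
proof (cases rule: reorder_list_cases)
  case unchanged
  then show ?thesis using assms(3) by simp
next
  case (inner_first xs s t ys)
  then have "ext_segment (reflect_about s t)"
    using assms(2,3) condN_list_adjacent[of xs s t ys]
    by (intro ext_segment_reflect_about) (auto simp: ext_segment_def)
  then show ?thesis
    using assms(3) inner_first by auto
next
  case (outer_first xs s t ys)
  then have "ext_segment (reflect_about t s)"
    using assms(2,3) condN_list_adjacent[of xs s t ys]
    by (intro ext_segment_reflect_about) (auto simp: ext_segment_def abs_minus_commute)
  then show ?thesis
    using assms(3) outer_first by auto
qed

fun parity_sum_from :: "int \<Rightarrow> seg list \<Rightarrow> int" where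
  "parity_sum_from P [] = 0"
| "parity_sum_from P (x # xs) =
     segmu x div 2 + segmu x * P + parity_sum_from (P + (seg_b x - 1)) xs"

lemma parity_sum_from_eq:
  "parity_sum_from P L =
     (\<Sum>i<length L. segmu (L!i) div 2 + segmu (L!i) * (P + (\<Sum>j<i. seg_b (L!j) - 1)))"
proof (induction L arbitrary: P)
  case Nil
  then show ?case by simp
next
  case (Cons x xs)
  have "segmu ((x # xs) ! Suc i) * (P + (\<Sum>j<Suc i. seg_b ((x # xs) ! j) - 1))
      = segmu (xs ! i) * (P + (seg_b x - 1) + (\<Sum>j<i. seg_b (xs ! j) - 1))" for i
    by (simp only: sum.lessThan_Suc_shift) (simp add: algebra_simps)
  then show ?case
    by (simp only: length_Cons sum.lessThan_Suc_shift) (simp add: Cons.IH add.assoc)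
qed

lemma parity_sum_eq_parity_sum_from: "parity_sum L = parity_sum_from 0 L"
  by (simp add: parity_sum_def parity_sum_from_eq)

lemma parity_sum_from_append:
  "parity_sum_from P (xs @ ys) =
     parity_sum_from P xs + parity_sum_from (P + (\<Sum>x\<leftarrow>xs. seg_b x - 1)) ys"
  by (induction xs arbitrary: P) (simp_all add: algebra_simps)

lemma parity_sum_swap:
  assumes "formal_ext_segment s" "formal_ext_segment t"
  shows "even (parity_sum (xs @ reflect_about s t # s # ys) - parity_sum (xs @ s # t # ys))"
proof -
  define P where "P = (\<Sum>x\<leftarrow>xs. seg_b x - 1)"
  obtain k l where k: "segmu s = seg_b s + 2 * k" and l: "segmu t = seg_b t + 2 * l"
    using assms unfolding formal_ext_segment_def by (metis add.commute diff_add_cancel evenE)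
  have "(2 * segmu s - segmu t) div 2 - segmu t div 2 = segmu s - segmu t"
    by presburger
  then have "parity_sum (xs @ reflect_about s t # s # ys) - parity_sum (xs @ s # t # ys)
      = segmu s * seg_b t - segmu t * seg_b s + 2 * (segmu s - segmu t) * P"
    by (simp add: parity_sum_eq_parity_sum_from parity_sum_from_append P_def[symmetric]
        algebra_simps)
  also have "\<dots> = 2 * (k * seg_b t - l * seg_b s + (segmu s - segmu t) * P)"
    by (simp add: k l algebra_simps)
  finally show ?thesis
    by simp
qed

lemma reorder_list_parity_sum:
  assumes "reorder_list L L'" "\<forall>x\<in>set L. formal_ext_segment x"
  shows "even (parity_sum L' - parity_sum L)"
  using assms(1)
proof (cases rule: reorder_list_cases)
  case unchanged
  then show ?thesis by simp
next
  case (inner_first xs s t ys)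
  then show ?thesis
    using assms(2) parity_sum_swap[of s t xs ys] by simp
next
  case (outer_first xs s t ys)
  have "formal_ext_segment t" "formal_ext_segment (reflect_about t s)"
    using assms(2) outer_first(1) by (auto intro: formal_ext_segment_reflect_about)
  then have "even (parity_sum L - parity_sum L')"
    using parity_sum_swap[of t "reflect_about t s" xs ys] outer_first by simp
  then show ?thesis
    by (simp add: even_diff)
qed

section \<open>The normal form\<close>

text \<open>The value of \<open>\<mu>\<close> that \<open>z\<close>, carrying \<open>m\<close>, acquires when moved in front of \<open>p\<close>:
  passing a segment \<open>y \<subset> z\<close> turns \<open>\<mu>\<close> into \<open>2\<mu>\<^sub>y - \<mu>\<close>, other entries are not counted.\<close>

definition front_mu :: "seg list \<Rightarrow> seg \<Rightarrow> int \<Rightarrow> int" where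
  "front_mu p z m = foldr (\<lambda>y m. if nested y z \<and> \<not> nested z y then 2 * segmu y - m else m) p m"

lemma front_mu_Nil [simp]: "front_mu [] z m = m"
  by (simp add: front_mu_def)

lemma front_mu_Cons [simp]:
  "front_mu (y # p) z m = (if nested y z \<and> \<not> nested z y then 2 * segmu y - front_mu p z m else front_mu p z m)"
  by (simp add: front_mu_def)

lemma front_mu_append: "front_mu (p @ q) z m = front_mu p z (front_mu q z m)"
  by (simp add: front_mu_def)

lemma front_mu_reflect_about [simp]: "front_mu p (reflect_about s t) = front_mu p t"
  by (simp add: front_mu_def nested_def fun_eq_iff)

lemma front_mu_swap:
  assumes "nested s t"
  shows "front_mu [reflect_about s t, s] = front_mu [s, t]"
  using assms by (auto simp: fun_eq_iff nested_def)

fun normal_form :: "seg list \<Rightarrow> seg list \<Rightarrow> seg list" where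
  "normal_form p [] = []"
| "normal_form p (x # xs) = (segA x, segB x, front_mu p x (segmu x)) # normal_form (p @ [x]) xs"

lemma normal_form_append: "normal_form p (xs @ ys) = normal_form p xs @ normal_form (p @ xs) ys"
  by (induction xs arbitrary: p) simp_all

lemma normal_form_cong: "front_mu p = front_mu q \<Longrightarrow> normal_form p ys = normal_form q ys"
proof (induction ys arbitrary: p q)
  case Nil
  then show ?case by simp
next
  case (Cons x ys)
  have "normal_form (p @ [x]) ys = normal_form (q @ [x]) ys"
    by (rule Cons.IH) (simp add: fun_eq_iff front_mu_append Cons.prems)
  then show ?case
    using Cons.prems by simp
qed

lemma normal_form_swap:
  assumes "nested s t" "segA s = segA t \<and> segB s = segB t \<Longrightarrow> segmu s = segmu t"
  shows "mset (normal_form p (xs @ reflect_about s t # s # ys)) = mset (normal_form p (xs @ s # t # ys))"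
proof -
  define q where "q = p @ xs"
  define u where "u = reflect_about s t"
  have tail: "normal_form (q @ [u, s]) ys = normal_form (q @ [s, t]) ys"
  proof (rule normal_form_cong)
    show "front_mu (q @ [u, s]) = front_mu (q @ [s, t])"
      using front_mu_swap[OF assms(1)] by (simp add: fun_eq_iff front_mu_append[of q] u_def)
  qed
  have s: "front_mu (q @ [u]) s (segmu s) = front_mu q s (segmu s)"
    using assms(1) by (simp add: front_mu_append nested_def u_def)
  have t: "front_mu (q @ [s]) t (segmu t) = front_mu q u (segmu u)"
    using assms by (auto simp: front_mu_append nested_def u_def)
  have "normal_form p (xs @ u # s # ys) =
      normal_form p xs @ (segA u, segB u, front_mu q u (segmu u)) #
        (segA s, segB s, front_mu (q @ [u]) s (segmu s)) # normal_form (q @ [u, s]) ys"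
    by (simp add: normal_form_append q_def)
  moreover have "normal_form p (xs @ s # t # ys) =
      normal_form p xs @ (segA s, segB s, front_mu q s (segmu s)) #
        (segA t, segB t, front_mu (q @ [s]) t (segmu t)) # normal_form (q @ [s, t]) ys"
    by (simp add: normal_form_append q_def)
  moreover have "segA u = segA t" "segB u = segB t"
    by (simp_all add: u_def)
  ultimately show ?thesis
    unfolding u_def[symmetric] by (simp only: tail s t) simp
qed

lemma normal_form_sorted: "sorted (map standard_key (p @ L)) \<Longrightarrow> normal_form p L = L"
proof (induction L arbitrary: p)
  case Nil
  then show ?case by simp
next
  case (Cons x L)
  have "\<forall>y\<in>set p. standard_key y \<le> standard_key x"
    using Cons.prems by (simp add: sorted_append)
  then have "front_mu p x m = m" for m
    by (induction p) (auto dest: nested_if_standard_key_le)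
  then show ?case
    using Cons.IH[of "p @ [x]"] Cons.prems by simp
qed

lemma reorder_list_normal_form:
  assumes "reorder_list L L'" "condN_list L"
  shows "mset (normal_form [] L') = mset (normal_form [] L)"
  using assms(1)
proof (cases rule: reorder_list_cases)
  case unchanged
  then show ?thesis by simp
next
  case (inner_first xs s t ys)
  have "segmu s = segmu t" if "segA s = segA t \<and> segB s = segB t"
    using that condN_list_adjacent[of xs s t ys] assms(2) inner_first(1) by simp
  then show ?thesis
    unfolding inner_first(1,3) by (intro normal_form_swap inner_first(2))
next
  case (outer_first xs s t ys)
  have "\<not> (segA t = segA s \<and> segB t = segB s)"
    using outer_first(3) by (auto simp: nested_def)
  then have "mset (normal_form [] (xs @ reflect_about t (reflect_about t s) # t # ys))
      = mset (normal_form [] (xs @ t # reflect_about t s # ys))"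
    using outer_first(2) by (intro normal_form_swap) (auto simp: nested_def)
  then show ?thesis
    unfolding outer_first(1,4) by simp
qed

section \<open>Existence and uniqueness of the standard representative\<close>

lemma reorder_list_insert_sorted:
  assumes "seg_ordered (x # ys)" "sorted (map standard_key ys)"
  shows "\<exists>L. reorder_list\<^sup>*\<^sup>* (x # ys) L \<and> sorted (map standard_key L)"
  using assms
proof (induction ys arbitrary: x)
  case Nil
  then show ?case by auto
next
  case (Cons y zs)
  show ?case
  proof (cases "standard_key x \<le> standard_key y")
    case True
    then have "sorted (map standard_key (x # y # zs))"
      using Cons.prems(2) by (auto intro: order_trans)
    then show ?thesis
      by blast
  next
    case False
    have "\<not> seg_lt y x"
      using Cons.prems(1) by (simp add: seg_ordered_def)
    with False have "nested x y"
      by (auto simp: standard_key_def seg_lt_def nested_def less_eq_prod_def)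
    then have first: "reorder_list (x # y # zs) (reflect_about x y # x # zs)"
      by (rule reorder_list_nested_front)
    obtain W where W: "reorder_list\<^sup>*\<^sup>* (x # zs) W" "sorted (map standard_key W)"
      using Cons.IH[of x] Cons.prems by (auto simp: seg_ordered_def)
    have "standard_key ` set W = standard_key ` set (x # zs)"
      using reorder_lists_mset_standard_key[OF W(1)] by (metis set_map set_mset_mset)
    moreover have "\<forall>k\<in>standard_key ` set (x # zs). standard_key y \<le> k"
      using False Cons.prems(2) by auto
    ultimately have "\<forall>w\<in>set W. standard_key y \<le> standard_key w"
      by blast
    then have "sorted (map standard_key (reflect_about x y # W))"
      using W(2) by simp
    moreover have "reorder_list\<^sup>*\<^sup>* (x # y # zs) (reflect_about x y # W)"
      using first W(1) reorder_lists_Cons by (metis converse_rtranclp_into_rtranclp)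
    ultimately show ?thesis
      by blast
  qed
qed

lemma reorder_list_sorted:
  "seg_ordered L \<Longrightarrow> \<exists>L'. reorder_list\<^sup>*\<^sup>* L L' \<and> sorted (map standard_key L')"
proof (induction L)
  case Nil
  then show ?case by auto
next
  case (Cons x xs)
  then obtain ys where ys: "reorder_list\<^sup>*\<^sup>* xs ys" "sorted (map standard_key ys)"
    by (auto simp: seg_ordered_def)
  have "reorder_list\<^sup>*\<^sup>* (x # xs) (x # ys)"
    using ys(1) by (rule reorder_lists_Cons)
  moreover obtain L' where "reorder_list\<^sup>*\<^sup>* (x # ys) L'" "sorted (map standard_key L')"
    using reorder_list_insert_sorted reorder_lists_seg_ordered[OF calculation Cons.prems] ys(2)
    by blast
  ultimately show ?case
    by (meson rtranclp_trans)
qed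

lemma sorted_standard_key_condN_list:
  assumes "sorted (map standard_key L)" "condN_list L"
  shows "sorted (map (\<lambda>x. (standard_key x, segmu x)) L)"
  unfolding sorted_iff_nth_Suc
proof (intro allI impI)
  fix i
  assume i: "Suc i < length (map (\<lambda>x. (standard_key x, segmu x)) L)"
  have "standard_key (L ! i) \<le> standard_key (L ! Suc i)"
    using assms(1) i by (simp add: sorted_iff_nth_Suc)
  moreover have "segmu (L ! i) = segmu (L ! Suc i)"
    if "standard_key (L ! i) = standard_key (L ! Suc i)"
    using that assms(2) i by (auto simp: condN_list_def standard_key_eq_iff)
  ultimately have "standard_key (L ! i) < standard_key (L ! Suc i) \<or>
      standard_key (L ! i) = standard_key (L ! Suc i) \<and> segmu (L ! i) = segmu (L ! Suc i)"
    by (auto simp: order.order_iff_strict)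
  then show "map (\<lambda>x. (standard_key x, segmu x)) L ! i \<le>
      map (\<lambda>x. (standard_key x, segmu x)) L ! Suc i"
    using i by (auto simp: less_eq_prod_def)
qed

lemma sorted_condN_list_unique:
  assumes "sorted (map standard_key L1)" "condN_list L1"
    and "sorted (map standard_key L2)" "condN_list L2"
    and "mset (normal_form [] L1) = mset (normal_form [] L2)"
  shows "L1 = L2"
proof -
  define f where "f = (\<lambda>x. (standard_key x, segmu x))"
  have "inj f"
    by (rule injI) (metis f_def prod.inject seg_eta standard_key_eq_iff)
  have "mset L1 = mset L2"
    using assms(1,3,5) by (simp add: normal_form_sorted[of "[]"])
  then have "sort_key f L1 = L2"
    using sorted_standard_key_condN_list[OF assms(3,4)] \<open>inj f\<close>
    by (intro sort_key_inj_key_eq) (auto simp: f_def inj_on_def)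
  moreover have "sort_key f L1 = L1"
    using sorted_standard_key_condN_list[OF assms(1,2)] by (simp add: f_def sort_key_id_if_sorted)
  ultimately show ?thesis
    by simp
qed

lemma supp_fun_upd_mset_key_eq:
  assumes "mset (map k L) = mset (map k (T \<rho>))"
  shows "supp (T(\<rho> := L)) = supp T"
proof -
  have "L = [] \<longleftrightarrow> T \<rho> = []"
    using assms by (metis Nil_is_map_conv mset_zero_iff)
  then show ?thesis
    by (auto simp: supp_def)
qed

lemma good_parity_param_fun_upd:
  fixes T :: "'r \<Rightarrow> seg list"
  assumes "good_parity_param d orth dt T"
    and keys: "mset (map standard_key L) = mset (map standard_key (T \<rho>))"
  shows "good_parity_param d orth dt (T(\<rho> := L))"
proof -
  define T' where "T' = T(\<rho> := L)"
  have supp: "supp T' = supp T"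
    unfolding T'_def using keys by (rule supp_fun_upd_mset_key_eq)
  have sum_eq: "(\<Sum>s\<leftarrow>T' \<sigma>. h \<sigma> s) = (\<Sum>s\<leftarrow>T \<sigma>. h \<sigma> s)"
    if "\<And>x y. standard_key x = standard_key y \<Longrightarrow> h \<rho> x = h \<rho> y"
    for h :: "'r \<Rightarrow> seg \<Rightarrow> 'z::comm_monoid_add" and \<sigma>
    using sum_list_map_eq_if_mset_key_eq[OF keys that] by (simp add: T'_def)
  have ball_eq: "(\<forall>s\<in>set (T' \<sigma>). P \<sigma> s) \<longleftrightarrow> (\<forall>s\<in>set (T \<sigma>). P \<sigma> s)"
    if "\<And>x y. standard_key x = standard_key y \<Longrightarrow> P \<rho> x \<longleftrightarrow> P \<rho> y" for P \<sigma>
    using ball_set_eq_if_mset_key_eq[OF keys that] by (simp add: T'_def)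
  have dim: "param_dim d T' = param_dim d T"
    unfolding param_dim_def supp by (intro sum.cong refl sum_eq) (auto dest!: standard_key_eqD)
  have det: "param_det dt T' = param_det dt T"
    unfolding param_det_def supp by (intro sum.cong refl sum_eq) (auto dest!: standard_key_eqD)
  have orth: "(\<forall>s\<in>set (T' \<sigma>). summand_orth orth \<sigma> s) \<longleftrightarrow> (\<forall>s\<in>set (T \<sigma>). summand_orth orth \<sigma> s)"
    and not_orth: "(\<forall>s\<in>set (T' \<sigma>). \<not> summand_orth orth \<sigma> s) \<longleftrightarrow>
      (\<forall>s\<in>set (T \<sigma>). \<not> summand_orth orth \<sigma> s)" for \<sigma>
    by (intro ball_eq; auto simp: summand_orth_def dest!: standard_key_eqD)+
  show ?thesis
    using assms(1) unfolding T'_def[symmetric] good_parity_param_def supp dim det orth not_orth .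
qed

lemma ext_multiseg_fun_upd:
  assumes E: "ext_multiseg d orth dt T"
    and keys: "mset (map standard_key L) = mset (map standard_key (T \<rho>))"
    and ord: "seg_ordered L"
    and ext: "\<forall>x\<in>set L. ext_segment x"
    and par: "even (parity_sum L - parity_sum (T \<rho>))"
  shows "ext_multiseg d orth dt (T(\<rho> := L))"
proof (cases "T \<rho> = []")
  case True
  then have "L = []"
    using keys by simp
  with True have "T(\<rho> := L) = T"
    by (simp add: fun_upd_idem_iff)
  then show ?thesis
    using E by simp
next
  case False
  define T' where "T' = T(\<rho> := L)"
  have F: "formal_ext_multiseg d orth dt T"
    using E by (rule ext_multiseg_formal)
  have supp: "supp T' = supp T"
    unfolding T'_def using keys by (rule supp_fun_upd_mset_key_eq)
  have "formal_ext_multiseg d orth dt T'"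
    unfolding formal_ext_multiseg_def
  proof (intro conjI)
    show "finite (supp T')"
      using F by (simp add: supp formal_ext_multiseg_def)
    show "\<forall>\<sigma>. \<forall>s\<in>set (T' \<sigma>). formal_ext_segment s"
      using F ext by (simp add: T'_def formal_ext_multiseg_def ext_segment_def)
    have "seg_ordered (T' \<sigma>)" for \<sigma>
      using F ord by (simp add: T'_def formal_ext_multiseg_seg_ordered)
    then show "\<forall>\<sigma>. \<forall>i<length (T' \<sigma>). \<forall>j<length (T' \<sigma>).
        segA (T' \<sigma> ! i) > segA (T' \<sigma> ! j) \<and> segB (T' \<sigma> ! i) > segB (T' \<sigma> ! j) \<longrightarrow> i > j"
      by (simp add: seg_ordered_iff)
    have "(\<forall>s\<in>set L. segA s + segB s \<ge> 0) \<longleftrightarrow> (\<forall>s\<in>set (T \<rho>). segA s + segB s \<ge> 0)"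
      by (rule ball_set_eq_if_mset_key_eq[OF keys]) (auto dest!: standard_key_eqD)
    then show "\<forall>\<sigma>. \<forall>s\<in>set (T' \<sigma>). segA s + segB s \<ge> 0"
      using F by (simp add: T'_def formal_ext_multiseg_def)
    show "good_parity_param d orth dt T'"
      unfolding T'_def using F keys by (simp add: formal_ext_multiseg_def good_parity_param_fun_upd)
    have "parity_sum (T' \<sigma>) =
        parity_sum (T \<sigma>) + (if \<sigma> = \<rho> then parity_sum L - parity_sum (T \<rho>) else 0)" for \<sigma>
      by (simp add: T'_def)
    moreover have "\<rho> \<in> supp T"
      using False by (simp add: supp_def)
    ultimately have "(\<Sum>\<sigma>\<in>supp T. parity_sum (T' \<sigma>)) =
        (\<Sum>\<sigma>\<in>supp T. parity_sum (T \<sigma>)) + (parity_sum L - parity_sum (T \<rho>))"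
      using F by (simp add: sum.distrib formal_ext_multiseg_def)
    then show "even (\<Sum>\<sigma>\<in>supp T'. parity_sum (T' \<sigma>))"
      using F par by (simp add: supp formal_ext_multiseg_def)
  qed
  then show ?thesis
    using E ext by (simp add: ext_multiseg_def T'_def)
qed

lemma ext_multiseg_reorder_step:
  assumes "ext_multiseg d orth dt T" "condN T" "reorder_step T T'"
  shows "ext_multiseg d orth dt T'"
proof -
  obtain \<rho> L where L: "reorder_list (T \<rho>) L" and T': "T' = T(\<rho> := L)"
    using assms(3) by (rule reorder_stepE)
  have ext: "\<forall>x\<in>set (T \<rho>). ext_segment x"
    using assms(1) by (simp add: ext_multiseg_def)
  show ?thesis
    unfolding T'
  proof (rule ext_multiseg_fun_upd[OF assms(1)])
    show "mset (map standard_key L) = mset (map standard_key (T \<rho>))"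
      using L by (rule reorder_list_mset_standard_key)
    have "seg_ordered (T \<rho>)"
      using assms(1) by (intro formal_ext_multiseg_seg_ordered ext_multiseg_formal)
    with L show "seg_ordered L"
      by (rule reorder_list_seg_ordered)
    have "condN_list (T \<rho>)"
      using assms(2) by (simp add: condN_iff_condN_list)
    with L show "\<forall>x\<in>set L. ext_segment x"
      using ext by (rule reorder_list_ext_segments)
    have "\<forall>x\<in>set (T \<rho>). formal_ext_segment x"
      using ext by (simp add: ext_segment_def)
    with L show "even (parity_sum L - parity_sum (T \<rho>))"
      by (rule reorder_list_parity_sum)
  qed
qed

lemma normal_form_reorder_step:
  assumes "condN T" "reorder_step T T'"
  shows "mset (normal_form [] (T' \<sigma>)) = mset (normal_form [] (T \<sigma>))"
proof -
  obtain \<rho> L where L: "reorder_list (T \<rho>) L" and T': "T' = T(\<rho> := L)"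
    using assms(2) by (rule reorder_stepE)
  have "condN_list (T \<rho>)"
    using assms(1) by (simp add: condN_iff_condN_list)
  then have "mset (normal_form [] L) = mset (normal_form [] (T \<rho>))"
    using L by (intro reorder_list_normal_form)
  then show ?thesis
    by (simp add: T')
qed

lemma reorder_steps_standard:
  assumes "finite (supp T)" "\<forall>\<rho>. seg_ordered (T \<rho>)"
  shows "\<exists>T'. reorder_step\<^sup>*\<^sup>* T T' \<and> standard T'"
proof -
  have "\<exists>T'. reorder_step\<^sup>*\<^sup>* T T' \<and> (\<forall>\<rho>\<in>F. sorted (map standard_key (T' \<rho>))) \<and>
      (\<forall>\<rho>. \<rho> \<notin> F \<longrightarrow> T' \<rho> = T \<rho>)" if "finite F" for F
    using that
  proof (induction F rule: finite_induct)
    case empty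
    then show ?case by auto
  next
    case (insert \<rho> F)
    then obtain T1 where T1: "reorder_step\<^sup>*\<^sup>* T T1" "\<forall>\<sigma>\<in>F. sorted (map standard_key (T1 \<sigma>))"
        "\<forall>\<sigma>. \<sigma> \<notin> F \<longrightarrow> T1 \<sigma> = T \<sigma>"
      by blast
    have "seg_ordered (T1 \<rho>)"
      using assms(2) T1(3) insert.hyps(2) by simp
    then obtain L where L: "reorder_list\<^sup>*\<^sup>* (T1 \<rho>) L" "sorted (map standard_key L)"
      using reorder_list_sorted by blast
    have "reorder_step\<^sup>*\<^sup>* T (T1(\<rho> := L))"
      using T1(1) reorder_lists_reorder_steps[of T1 \<rho> L, OF L(1)] by (rule rtranclp_trans)
    moreover have "\<forall>\<sigma>\<in>insert \<rho> F. sorted (map standard_key ((T1(\<rho> := L)) \<sigma>))"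
      using T1(2) L(2) by simp
    moreover have "\<forall>\<sigma>. \<sigma> \<notin> insert \<rho> F \<longrightarrow> (T1(\<rho> := L)) \<sigma> = T \<sigma>"
      using T1(3) by simp
    ultimately show ?case
      by blast
  qed
  from this[OF assms(1)] obtain T' where T': "reorder_step\<^sup>*\<^sup>* T T'"
      "\<forall>\<rho>\<in>supp T. sorted (map standard_key (T' \<rho>))" "\<forall>\<rho>. \<rho> \<notin> supp T \<longrightarrow> T' \<rho> = T \<rho>"
    by blast
  have "sorted (map standard_key (T' \<rho>))" for \<rho>
    using T'(2,3) by (cases "\<rho> \<in> supp T") (auto simp: supp_def)
  then show ?thesis
    using T'(1) by (auto simp: standard_iff)
qed

lemma Rep_condN: "Rep d orth dt S \<Longrightarrow> T \<in> equiv_class S \<Longrightarrow> condN T"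
  by (simp add: Rep_def)

lemma reorder_steps_equiv_class: "reorder_step\<^sup>*\<^sup>* S T \<Longrightarrow> T \<in> equiv_class S"
  by (simp add: equiv_class_def rtranclp_into_equivclp)

lemma Rep_reorder_steps_ext_multiseg:
  assumes "Rep d orth dt S" "reorder_step\<^sup>*\<^sup>* S T"
  shows "ext_multiseg d orth dt T"
  using assms(2)
proof (induction rule: rtranclp_induct)
  case base
  then show ?case
    using assms(1) by (simp add: Rep_def)
next
  case (step T T')
  have "condN T"
    using assms(1) step.hyps(1) by (intro Rep_condN reorder_steps_equiv_class)
  with step.IH show ?case
    using step.hyps(2) by (rule ext_multiseg_reorder_step)
qed

lemma Rep_equiv_class_normal_form:
  assumes "Rep d orth dt S" "T \<in> equiv_class S"
  shows "mset (normal_form [] (T \<sigma>)) = mset (normal_form [] (S \<sigma>))"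
proof -
  have "equivclp reorder_step S T"
    using assms(2) by (simp add: equiv_class_def)
  then show ?thesis
  proof (induction rule: equivclp_induct)
    case base
    then show ?case by simp
  next
    case (step T T')
    have "equivclp reorder_step S T'"
      using equivclp_into_equivclp[of reorder_step S T T'] step.hyps by blast
    then have "condN T" "condN T'"
      using assms(1) step.hyps(1) by (simp_all add: Rep_condN equiv_class_def)
    have "mset (normal_form [] (T' \<sigma>)) = mset (normal_form [] (T \<sigma>))"
      using step.hyps(2)
    proof
      assume "reorder_step T T'"
      with \<open>condN T\<close> show ?thesis
        by (rule normal_form_reorder_step)
    next
      assume "reorder_step T' T"
      with \<open>condN T'\<close> show ?thesis
        by (rule normal_form_reorder_step[symmetric])
    qed
    with step.IH show ?case
      by simp
  qed
qed

lemma standard_condN_unique: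
  assumes "standard T1" "condN T1" "standard T2" "condN T2"
    and "\<And>\<rho>. mset (normal_form [] (T1 \<rho>)) = mset (normal_form [] (T2 \<rho>))"
  shows "T1 = T2"
proof
  fix \<rho>
  show "T1 \<rho> = T2 \<rho>"
    using assms(1-4) by (intro sorted_condN_list_unique assms(5))
      (simp_all add: standard_iff condN_iff_condN_list)
qed

theorem proposition3p5:
  fixes d :: "'r \<Rightarrow> nat" and orth :: "'r \<Rightarrow> bool" and dt :: "'r \<Rightarrow> 'q::ab_group_add"
    and S :: "'r \<Rightarrow> seg list"
  assumes "\<forall>\<rho>. d \<rho> > 0"
    and "\<forall>\<rho>. \<not> orth \<rho> \<longrightarrow> even (d \<rho>) \<and> dt \<rho> = 0"
    and "\<forall>\<rho>. dt \<rho> + dt \<rho> = 0"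
    and "Rep d orth dt S"
  shows "\<exists>!S'. S' \<in> equiv_class S \<and> ext_multiseg d orth dt S' \<and> standard S'"
proof -
  have F: "formal_ext_multiseg d orth dt S"
    using assms(4) by (simp add: Rep_def ext_multiseg_def)
  then have "finite (supp S)"
    by (simp add: formal_ext_multiseg_def)
  moreover have "\<forall>\<rho>. seg_ordered (S \<rho>)"
    using F by (simp add: formal_ext_multiseg_seg_ordered)
  ultimately obtain T where T: "reorder_step\<^sup>*\<^sup>* S T" "standard T"
    using reorder_steps_standard by blast
  then have T_class: "T \<in> equiv_class S"
    by (simp add: reorder_steps_equiv_class)
  show ?thesis
  proof (rule ex1I)
    show "T \<in> equiv_class S \<and> ext_multiseg d orth dt T \<and> standard T"
      using T T_class Rep_reorder_steps_ext_multiseg[OF assms(4) T(1)] by simp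
  next
    fix T'
    assume T': "T' \<in> equiv_class S \<and> ext_multiseg d orth dt T' \<and> standard T'"
    show "T' = T"
    proof (rule standard_condN_unique)
      show "standard T'" "condN T'" "standard T" "condN T"
        using T' T(2) T_class Rep_condN[OF assms(4)] by simp_all
      show "mset (normal_form [] (T' \<rho>)) = mset (normal_form [] (T \<rho>))" for \<rho>
        using T' T_class Rep_equiv_class_normal_form[OF assms(4)] by simp
    qed
  qed
qed

end
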